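(* Let $\mathcal{X}$ be a real Hilbert space, let $\mathbb{A},\mathbb{B},\mathbb{C}:\mathcal{X}\to 2^{\mathcal{X}}$ be maximal monotone operators with $\mathbb{C}$ $\beta$-cocoercive for some $\beta>0$ (so $\mathbb{C}$ is single-valued), let $\gamma>0$, and define $$T=\mathbb{J}_{\gamma\mathbb{C}}\circ\big(\mathbb{J}_{\gamma \mathbb{A}}\circ(2\mathbb{J}_{\gamma \mathbb{B}}-I-\gamma \mathbb{C}\mathbb{J}_{\gamma \mathbb{B}})+\gamma \mathbb{C}\mathbb{J}_{\gamma \mathbb{B}}\big)+ (I-\mathbb{J}_{\gamma \mathbb{B}}).$$ Then $$\operatorname{zer}(\mathbb{A}+\mathbb{B}+\mathbb{C})=\mathbb{J}_{\gamma\mathbb{B}}(\operatorname{Fix}T),$$ where $\operatorname{Fix}T=\{x+\gamma u\;:\;0\in(\mathbb{A}+\mathbb{B}+\mathbb{C})x,\ u\in(\mathbb{B}x)\cap(-\mathbb{A}x-\mathbb{C}x)\}$.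
   Context: For a monotone operator $M$, $\mathbb{J}_{M}=(I+M)^{-1}$ is its resolvent ($I$ the identity on $\mathcal{X}$). $\operatorname{zer}(M)=\{x: 0\in Mx\}$. $\operatorname{Fix}T=\{z: Tz=z\}$ is the fixed-point set of $T$. An operator $\mathbb{C}$ is $\beta$-cocoercive if $\langle u-v,x-y\rangle\ge\beta\|u-v\|^2$ for all $x,y$, $u\in\mathbb{C}x$, $v\in\mathbb{C}y$. *)

theory Defs
  imports "HOL-Analysis.Analysis"
begin

type_synonym 'a operator = "'a \<Rightarrow> 'a set"

definition monotone_op :: "('a::real_inner) operator \<Rightarrow> bool" where
  "monotone_op M \<longleftrightarrow> (\<forall>x y u v. u \<in> M x \<longrightarrow> v \<in> M y \<longrightarrow> inner (u - v) (x - y) \<ge> 0)"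

definition maximal_monotone :: "('a::real_inner) operator \<Rightarrow> bool" where
  "maximal_monotone M \<longleftrightarrow> monotone_op M \<and>
     (\<forall>M'. monotone_op M' \<and> (\<forall>x. M x \<subseteq> M' x) \<longrightarrow> M' = M)"

definition cocoercive :: "real \<Rightarrow> ('a::real_inner) operator \<Rightarrow> bool" where
  "cocoercive \<beta> C \<longleftrightarrow> (\<forall>x y u v. u \<in> C x \<longrightarrow> v \<in> C y \<longrightarrow>
       inner (u - v) (x - y) \<ge> \<beta> * (norm (u - v))\<^sup>2)"

definition op_id :: "'a operator" where
  "op_id x = {x}"

definition op_add :: "('a::real_vector) operator \<Rightarrow> 'a operator \<Rightarrow> 'a operator" where
  "op_add M N x = {u + v | u v. u \<in> M x \<and> v \<in> N x}"

definition op_scale :: "real \<Rightarrow> ('a::real_vector) operator \<Rightarrow> 'a operator" where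
  "op_scale c M x = (\<lambda>u. c *\<^sub>R u) ` M x"

definition op_comp :: "'a operator \<Rightarrow> 'a operator \<Rightarrow> 'a operator" where
  "op_comp M N x = (\<Union>y\<in>N x. M y)"

text \<open>Resolvent J_M = (I + M)^{-1}: y \<in> J_M x iff x \<in> y + M y.\<close>
definition resolvent :: "('a::real_vector) operator \<Rightarrow> 'a operator" where
  "resolvent M x = {y. x - y \<in> M y}"

definition zer :: "('a::real_vector) operator \<Rightarrow> 'a set" where
  "zer M = {x. 0 \<in> M x}"

definition Fix :: "'a operator \<Rightarrow> 'a set" where
  "Fix T = {z. T z = {z}}"

definition op_image :: "'a operator \<Rightarrow> 'a set \<Rightarrow> 'a set" where
  "op_image M S = (\<Union>z\<in>S. M z)"

end

theory Submission
  imports Defs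
begin

text \<open>Since \<open>T z\<close> is empty when \<open>J\<^sub>\<gamma>\<^sub>B z\<close> is, every fixed point has the form
  \<open>z = x + \<gamma> b\<close> with \<open>b \<in> B x\<close>. Monotonicity of \<open>B\<close> gives \<open>J\<^sub>\<gamma>\<^sub>B z = {x}\<close>, and the
  cocoercive \<open>C\<close> is single-valued, \<open>C x = {c}\<close>. Evaluating \<open>T\<close> at \<open>z\<close> then leaves only the
  resolvents of \<open>A\<close> and \<open>C\<close>: \<open>z \<in> T z\<close> says that \<open>x\<close> is the \<open>J\<^sub>\<gamma>\<^sub>C\<close>-image of
  \<open>p + \<gamma> c\<close> for some \<open>p \<in> J\<^sub>\<gamma>\<^sub>A (x - \<gamma> (b + c))\<close>, which forces \<open>p = x\<close> and hence
  \<open>x - \<gamma> (b + c) = x + \<gamma> a\<close> with \<open>a \<in> A x\<close>, i.e. \<open>a + b + c = 0\<close>. Conversely such an \<open>a\<close>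
  makes every resolvent involved single-valued, so \<open>T z = {z}\<close>.\<close>

lemma mem_resolvent_scale:
  "y \<in> resolvent (op_scale \<gamma> M) z \<longleftrightarrow> (\<exists>m\<in>M y. z = y + \<gamma> *\<^sub>R m)"
  unfolding resolvent_def op_scale_def by (auto simp: algebra_simps)

lemma zer_add3_iff:
  "x \<in> zer (op_add (op_add A B) C) \<longleftrightarrow> (\<exists>a\<in>A x. \<exists>b\<in>B x. \<exists>c\<in>C x. a + b + c = 0)"
  unfolding zer_def by (force simp: op_add_def)

lemma cocoercive_imp_monotone_op:
  assumes "cocoercive \<beta> C" "\<beta> \<ge> 0"
  shows "monotone_op C"
  using assms unfolding cocoercive_def monotone_op_def
  by (meson order_trans zero_le_mult_iff zero_le_power2)

lemma cocoercive_single_valued: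
  assumes "cocoercive \<beta> C" "\<beta> > 0" "c \<in> C x"
  shows "C x = {c}"
proof -
  have "d = c" if "d \<in> C x" for d
  proof -
    have "\<beta> * (norm (d - c))\<^sup>2 \<le> inner (d - c) (x - x)"
      using assms that unfolding cocoercive_def by blast
    then show ?thesis using \<open>\<beta> > 0\<close> by (simp add: mult_le_0_iff)
  qed
  then show ?thesis using \<open>c \<in> C x\<close> by blast
qed

lemma resolvent_scale_unique:
  fixes M :: "('a::real_inner) operator"
  assumes "monotone_op M" "\<gamma> > 0"
    and "y1 \<in> resolvent (op_scale \<gamma> M) z" "y2 \<in> resolvent (op_scale \<gamma> M) z"
  shows "y1 = y2"
proof -
  obtain m1 m2 where m: "m1 \<in> M y1" "m2 \<in> M y2"
    and z: "z = y1 + \<gamma> *\<^sub>R m1" "z = y2 + \<gamma> *\<^sub>R m2"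
    using assms(3,4) by (auto simp: mem_resolvent_scale)
  have diff: "y1 - y2 = \<gamma> *\<^sub>R (m2 - m1)"
    using z by (simp add: algebra_simps)
  have "0 \<le> inner (m1 - m2) (y1 - y2)"
    using \<open>monotone_op M\<close> m unfolding monotone_op_def by blast
  also have "\<dots> = - \<gamma> * (norm (m1 - m2))\<^sup>2"
    by (simp add: diff power2_norm_eq_inner inner_commute algebra_simps)
  finally have "m1 = m2"
    using \<open>\<gamma> > 0\<close> by (simp add: mult_le_0_iff)
  then show ?thesis using diff by simp
qed

lemma resolvent_scale_eq_singleton:
  fixes M :: "('a::real_inner) operator"
  assumes "monotone_op M" "\<gamma> > 0" "m \<in> M y"
  shows "resolvent (op_scale \<gamma> M) (y + \<gamma> *\<^sub>R m) = {y}"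
  using assms resolvent_scale_unique[OF assms(1,2)] by (auto simp: mem_resolvent_scale)

definition three_op_splitting :: "real \<Rightarrow> ('a::real_vector) operator \<Rightarrow> 'a operator \<Rightarrow> 'a operator \<Rightarrow> 'a operator"
  where "three_op_splitting \<gamma> A B C =
    (let JB = resolvent (op_scale \<gamma> B); CJB = op_comp C JB
     in op_add
      (op_comp (resolvent (op_scale \<gamma> C))
         (op_add
            (op_comp (resolvent (op_scale \<gamma> A))
               (op_add (op_add (op_scale 2 JB) (op_scale (-1) op_id)) (op_scale (-\<gamma>) CJB)))
            (op_scale \<gamma> CJB)))
      (op_add op_id (op_scale (-1) JB)))"

lemma three_op_splitting_nonempty:
  assumes "w \<in> three_op_splitting \<gamma> A B C z"
  shows "\<exists>x\<in>resolvent (op_scale \<gamma> B) z. C x \<noteq> {}"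
  using assms unfolding three_op_splitting_def Let_def by (force simp: op_add_def op_comp_def op_scale_def)

lemma op_add_singleton_right:
  assumes "N x = {d}"
  shows "op_add M N x = (\<lambda>u. u + d) ` M x"
  using assms unfolding op_add_def by auto

lemma op_comp_singleton_right:
  assumes "N x = {y}"
  shows "op_comp M N x = M y"
  using assms unfolding op_comp_def by simp

lemma three_op_splitting_eq:
  assumes JB: "resolvent (op_scale \<gamma> B) z = {x}" and C: "C x = {c}"
  shows "three_op_splitting \<gamma> A B C z =
    (\<lambda>w. w + (z - x)) ` (\<Union>p\<in>resolvent (op_scale \<gamma> A) (2 *\<^sub>R x - z - \<gamma> *\<^sub>R c).
                            resolvent (op_scale \<gamma> C) (p + \<gamma> *\<^sub>R c))"
proof -
  have CJB: "op_comp C (resolvent (op_scale \<gamma> B)) z = {c}"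
    using JB C by (simp add: op_comp_singleton_right)
  have reflect: "op_add (op_add (op_scale 2 (resolvent (op_scale \<gamma> B))) (op_scale (-1) op_id))
      (op_scale (-\<gamma>) (op_comp C (resolvent (op_scale \<gamma> B)))) z = {2 *\<^sub>R x - z - \<gamma> *\<^sub>R c}"
    using JB CJB by (simp add: op_add_def op_scale_def op_id_def)
  have residual: "op_add op_id (op_scale (-1) (resolvent (op_scale \<gamma> B))) z = {z - x}"
    using JB by (simp add: op_add_def op_scale_def op_id_def)
  show ?thesis
    unfolding three_op_splitting_def Let_def
    using reflect residual CJB
    by (simp add: op_add_singleton_right op_comp_singleton_right op_scale_def op_comp_def image_UN)
qed

lemma mem_Fix_three_op_splitting_iff:
  fixes A B C :: "('a::real_inner) operator"
  assumes A: "monotone_op A" and B: "monotone_op B" and coco: "cocoercive \<beta> C" "\<beta> > 0"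
    and "\<gamma> > 0" and b: "b \<in> B x" and c: "c \<in> C x"
  shows "x + \<gamma> *\<^sub>R b \<in> Fix (three_op_splitting \<gamma> A B C) \<longleftrightarrow> (\<exists>a\<in>A x. a + b + c = 0)"
proof -
  let ?JA = "resolvent (op_scale \<gamma> A)" and ?JC = "resolvent (op_scale \<gamma> C)"
  have mC: "monotone_op C" using coco by (simp add: cocoercive_imp_monotone_op)
  have Cx: "C x = {c}" using cocoercive_single_valued[OF coco c] .
  have T: "three_op_splitting \<gamma> A B C (x + \<gamma> *\<^sub>R b) =
      (\<lambda>w. w + \<gamma> *\<^sub>R b) ` (\<Union>p\<in>?JA (x - \<gamma> *\<^sub>R (b + c)). ?JC (p + \<gamma> *\<^sub>R c))"
    using three_op_splitting_eq[where C = C, OF resolvent_scale_eq_singleton[OF B \<open>\<gamma> > 0\<close> b] Cx, of A]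
    by (simp add: scaleR_2 algebra_simps)
  show ?thesis
  proof
    assume "x + \<gamma> *\<^sub>R b \<in> Fix (three_op_splitting \<gamma> A B C)"
    then have "x + \<gamma> *\<^sub>R b \<in> three_op_splitting \<gamma> A B C (x + \<gamma> *\<^sub>R b)"
      by (simp add: Fix_def)
    then obtain p where p: "p \<in> ?JA (x - \<gamma> *\<^sub>R (b + c))" and "x \<in> ?JC (p + \<gamma> *\<^sub>R c)"
      unfolding T by auto
    then obtain c' where "c' \<in> C x" "p + \<gamma> *\<^sub>R c = x + \<gamma> *\<^sub>R c'"
      by (auto simp: mem_resolvent_scale)
    then have "p = x" using Cx by simp
    with p obtain a where a: "a \<in> A x" "x - \<gamma> *\<^sub>R (b + c) = x + \<gamma> *\<^sub>R a"
      by (auto simp: mem_resolvent_scale)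
    then have "\<gamma> *\<^sub>R (a + b + c) = 0" by (simp add: algebra_simps)
    then show "\<exists>a\<in>A x. a + b + c = 0" using a(1) \<open>\<gamma> > 0\<close> by auto
  next
    assume "\<exists>a\<in>A x. a + b + c = 0"
    then obtain a where a: "a \<in> A x" and eq: "x - \<gamma> *\<^sub>R (b + c) = x + \<gamma> *\<^sub>R a"
      by (auto simp: algebra_simps simp flip: scaleR_right_distrib)
    have "?JA (x - \<gamma> *\<^sub>R (b + c)) = {x}"
      unfolding eq using A \<open>\<gamma> > 0\<close> a by (rule resolvent_scale_eq_singleton)
    then show "x + \<gamma> *\<^sub>R b \<in> Fix (three_op_splitting \<gamma> A B C)"
      using T resolvent_scale_eq_singleton[OF mC \<open>\<gamma> > 0\<close> c] by (simp add: Fix_def)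
  qed
qed

definition shifted_zeros :: "real \<Rightarrow> ('a::real_vector) operator \<Rightarrow> 'a operator \<Rightarrow> 'a operator \<Rightarrow> 'a set"
  where "shifted_zeros \<gamma> A B C =
    {x + \<gamma> *\<^sub>R b | x a b c. a \<in> A x \<and> b \<in> B x \<and> c \<in> C x \<and> a + b + c = 0}"

lemma Fix_three_op_splitting:
  fixes A B C :: "('a::real_inner) operator"
  assumes "monotone_op A" "monotone_op B" "cocoercive \<beta> C" "\<beta> > 0" "\<gamma> > 0"
  shows "Fix (three_op_splitting \<gamma> A B C) = shifted_zeros \<gamma> A B C"
proof (intro set_eqI iffI)
  fix z assume z: "z \<in> Fix (three_op_splitting \<gamma> A B C)"
  then have "z \<in> three_op_splitting \<gamma> A B C z" by (simp add: Fix_def)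
  then obtain x c where "x \<in> resolvent (op_scale \<gamma> B) z" and c: "c \<in> C x"
    using three_op_splitting_nonempty by blast
  then obtain b where b: "b \<in> B x" "z = x + \<gamma> *\<^sub>R b"
    by (auto simp: mem_resolvent_scale)
  then obtain a where "a \<in> A x" "a + b + c = 0"
    using z mem_Fix_three_op_splitting_iff[OF assms b(1) c] by auto
  then show "z \<in> shifted_zeros \<gamma> A B C"
    unfolding shifted_zeros_def using b c by blast
next
  fix z assume "z \<in> shifted_zeros \<gamma> A B C"
  then show "z \<in> Fix (three_op_splitting \<gamma> A B C)"
    unfolding shifted_zeros_def using mem_Fix_three_op_splitting_iff[OF assms] by blast
qed

lemma op_image_resolvent_shifted_zeros:
  fixes B :: "('a::real_inner) operator"
  assumes "monotone_op B" "\<gamma> > 0"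
  shows "op_image (resolvent (op_scale \<gamma> B)) (shifted_zeros \<gamma> A B C) = zer (op_add (op_add A B) C)"
proof (intro set_eqI iffI)
  fix y assume "y \<in> op_image (resolvent (op_scale \<gamma> B)) (shifted_zeros \<gamma> A B C)"
  then obtain x a b c where "a \<in> A x" "b \<in> B x" "c \<in> C x" "a + b + c = 0"
    and "y \<in> resolvent (op_scale \<gamma> B) (x + \<gamma> *\<^sub>R b)"
    unfolding op_image_def shifted_zeros_def by blast
  then show "y \<in> zer (op_add (op_add A B) C)"
    using resolvent_scale_eq_singleton[OF assms] by (auto simp: zer_add3_iff)
next
  fix x assume "x \<in> zer (op_add (op_add A B) C)"
  then obtain a b c where abc: "a \<in> A x" "b \<in> B x" "c \<in> C x" "a + b + c = 0"
    by (auto simp: zer_add3_iff)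
  then have "x \<in> resolvent (op_scale \<gamma> B) (x + \<gamma> *\<^sub>R b)"
    using resolvent_scale_eq_singleton[OF assms] by blast
  then show "x \<in> op_image (resolvent (op_scale \<gamma> B)) (shifted_zeros \<gamma> A B C)"
    unfolding op_image_def shifted_zeros_def using abc by blast
qed

theorem lemma2:
  fixes A B C :: "('a::{real_inner, complete_space}) operator"
    and \<beta> \<gamma> :: real
  assumes "maximal_monotone A" and "maximal_monotone B" and "maximal_monotone C"
    and "\<beta> > 0" and "cocoercive \<beta> C" and "\<gamma> > 0"
  defines "JB \<equiv> resolvent (op_scale \<gamma> B)"
    and "CJB \<equiv> op_comp C (resolvent (op_scale \<gamma> B))"
  defines "T \<equiv> op_add
      (op_comp (resolvent (op_scale \<gamma> C))
         (op_add
            (op_comp (resolvent (op_scale \<gamma> A))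
               (op_add (op_add (op_scale 2 JB) (op_scale (-1) op_id)) (op_scale (-\<gamma>) CJB)))
            (op_scale \<gamma> CJB)))
      (op_add op_id (op_scale (-1) JB))"
  shows "zer (op_add (op_add A B) C) = op_image JB (Fix T) \<and>
         Fix T = {x + \<gamma> *\<^sub>R u | x u. 0 \<in> op_add (op_add A B) C x \<and>
                   u \<in> B x \<inter> {- a - c | a c. a \<in> A x \<and> c \<in> C x}}"
proof -
  have mono: "monotone_op A" "monotone_op B"
    using assms(1,2) by (simp_all add: maximal_monotone_def)
  have "T = three_op_splitting \<gamma> A B C"
    unfolding T_def JB_def CJB_def three_op_splitting_def Let_def ..
  then have Fix: "Fix T = shifted_zeros \<gamma> A B C"
    using Fix_three_op_splitting[OF mono assms(5,4,6)] by simp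
  have "b = - a - c \<longleftrightarrow> a + b + c = 0" for a b c :: 'a
    by (simp add: eq_diff_eq add_eq_0_iff add.assoc)
  then have "shifted_zeros \<gamma> A B C =
      {x + \<gamma> *\<^sub>R u | x u. 0 \<in> op_add (op_add A B) C x \<and>
        u \<in> B x \<inter> {- a - c | a c. a \<in> A x \<and> c \<in> C x}}"
    using zer_add3_iff[of _ A B C] unfolding zer_def shifted_zeros_def by blast
  then show ?thesis
    unfolding Fix JB_def op_image_resolvent_shifted_zeros[OF mono(2) assms(6)] by simp
qed

end
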